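(* Let $X$ be a compact metric space and $f\colon X\to X$ continuous. Then $\mathrm{Per}(f)\cup\{1\}\subseteq\mathrm{Per}(2^f)$, and $\mathrm{Per}(2^f)$ is closed under taking prime power divisors: if $n\in\mathrm{Per}(2^f)$, $p$ is prime and $p^a\mid n$ with $a\ge 1$, then $p^a\in\mathrm{Per}(2^f)$.
   Context: $2^X$ is the space of nonempty closed subsets of $X$ with the Hausdorff metric, and $2^f(C)=f(C)$. For a map $g$, $\mathrm{Per}(g)$ is the set of fundamental (least) periods of periodic points of $g$. *)

theory Defs
  imports "HOL-Analysis.Analysis" "HOL-Computational_Algebra.Primes"
begin

definition least_period :: "('a \<Rightarrow> 'a) \<Rightarrow> 'a \<Rightarrow> nat \<Rightarrow> bool" where
  "least_period g x n \<longleftrightarrow> n \<ge> 1 \<and> (g ^^ n) x = x \<and> (\<forall>m. 0 < m \<and> m < n \<longrightarrow> (g ^^ m) x \<noteq> x)"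

definition Per :: "'a set \<Rightarrow> ('a \<Rightarrow> 'a) \<Rightarrow> nat set" where
  "Per S g = {n. \<exists>x\<in>S. least_period g x n}"

definition hyperspace :: "'a::topological_space set \<Rightarrow> 'a set set" where
  "hyperspace X = {C. C \<subseteq> X \<and> C \<noteq> {} \<and> closed C}"

definition induced_map :: "('a \<Rightarrow> 'a) \<Rightarrow> 'a set \<Rightarrow> 'a set" where
  "induced_map f C = f ` C"

end

theory Submission
  imports Defs
begin

text \<open>
  Singletons carry the periods of f, and the eventual image of X (the intersection of all
  f^k(X)) is a fixed point of 2^f. Now let C have least period n under 2^f, let q = p^a
  divide n and write C_j = f^j(C). By minimality of n some point of C lies outside C_(n/p);
  choose such a point y whose type {j. y \<in> C_j} is minimal. Then y lies in the eventual
  image P under f^n of the compact set of points whose type contains that of y. If f^e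
  maps a point of P to y, then y \<in> C_j implies y \<in> C_(j+e), so y lies in C_j for every
  multiple j of gcd(e, n); since y \<notin> C_(n/p), this forces q to divide e. Hence the closed
  set \<Union>_i f^(iq)(P) is fixed by f^q but by no f^m with 0 < m < q.
\<close>

lemma funpow_induced_map: "(induced_map f ^^ m) A = (f ^^ m) ` A"
  by (induction m) (auto simp: induced_map_def image_comp)

lemma least_period_induced_map_iff:
  "least_period (induced_map f) A n \<longleftrightarrow>
     n \<ge> 1 \<and> (f ^^ n) ` A = A \<and> (\<forall>m. 0 < m \<and> m < n \<longrightarrow> (f ^^ m) ` A \<noteq> A)"
  by (simp add: least_period_def funpow_induced_map)

lemma funpow_image_subset: "f ` X \<subseteq> X \<Longrightarrow> (f ^^ m) ` X \<subseteq> X"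
  by (induction m) (auto simp: image_subset_iff)

lemma continuous_on_funpow:
  assumes "continuous_on X f" "f ` X \<subseteq> X"
  shows "continuous_on X (f ^^ m)"
proof (induction m)
  case (Suc m)
  have "continuous_on X (f \<circ> f ^^ m)"
    using Suc continuous_on_subset[OF assms(1) funpow_image_subset[OF assms(2)]]
    by (rule continuous_on_compose)
  then show ?case by simp
qed (simp add: continuous_on_id)

lemma compact_decreasing_nest_nonempty:
  fixes F :: "nat \<Rightarrow> 'a::t2_space set"
  assumes "\<And>n. compact (F n)" "\<And>n. F n \<noteq> {}" "\<And>m n. m \<le> n \<Longrightarrow> F n \<subseteq> F m"
  shows "(\<Inter>n. F n) \<noteq> {}"
proof -
  have "F 0 \<inter> (\<Inter>n. F n) \<noteq> {}"
  proof (rule compact_imp_fip_image)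
    fix I :: "nat set" assume "finite I"
    then have "F (Max (insert 0 I)) \<subseteq> F 0 \<inter> (\<Inter>n\<in>I. F n)"
      using assms(3) Max_ge[of "insert 0 I"] by blast
    then show "F 0 \<inter> (\<Inter>n\<in>I. F n) \<noteq> {}"
      using assms(2) by blast
  qed (use assms(1) compact_imp_closed in auto)
  then show ?thesis by blast
qed

definition eventual_image :: "('a \<Rightarrow> 'a) \<Rightarrow> 'a set \<Rightarrow> 'a set" where
  "eventual_image g A = (\<Inter>k. (g ^^ k) ` A)"

lemma eventual_image_subset: "eventual_image g A \<subseteq> A"
  unfolding eventual_image_def using INT_lower[of 0 UNIV "\<lambda>k. (g ^^ k) ` A"] by simp

context
  fixes g :: "'a::t2_space \<Rightarrow> 'a" and A :: "'a set"
  assumes compact: "compact A" and cont: "continuous_on A g" and maps: "g ` A \<subseteq> A"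
begin

lemma compact_funpow_image: "compact ((g ^^ k) ` A)"
  by (rule compact_continuous_image[OF continuous_on_funpow[OF cont maps] compact])

lemma funpow_image_antimono: "m \<le> n \<Longrightarrow> (g ^^ n) ` A \<subseteq> (g ^^ m) ` A"
proof (induction n rule: dec_induct)
  case (step n)
  have "(g ^^ Suc n) ` A = (g ^^ n) ` (g ` A)"
    by (simp only: funpow_Suc_right image_comp)
  also have "\<dots> \<subseteq> (g ^^ n) ` A"
    using maps by (rule image_mono)
  finally show ?case using step.IH by blast
qed simp

lemma compact_eventual_image: "compact (eventual_image g A)"
proof -
  have "closed (eventual_image g A)"
    unfolding eventual_image_def using compact_funpow_image compact_imp_closed by blast
  then have "compact (A \<inter> eventual_image g A)"
    by (rule compact_Int_closed[OF compact])
  then show ?thesis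
    using eventual_image_subset by (metis Int_absorb1)
qed

lemma eventual_image_nonempty: "A \<noteq> {} \<Longrightarrow> eventual_image g A \<noteq> {}"
  unfolding eventual_image_def
  by (rule compact_decreasing_nest_nonempty)
     (use compact_funpow_image funpow_image_antimono in auto)

lemma image_eventual_image: "g ` eventual_image g A = eventual_image g A"
proof
  have "g ` eventual_image g A \<subseteq> g ` (g ^^ k) ` A" for k
    by (rule image_mono) (auto simp: eventual_image_def)
  then have image_Suc: "g ` eventual_image g A \<subseteq> (g ^^ Suc k) ` A" for k
    by (simp add: image_comp)
  have "g ` eventual_image g A \<subseteq> (g ^^ k) ` A" for k
  proof -
    have "(g ^^ Suc k) ` A \<subseteq> (g ^^ k) ` A"
      by (rule funpow_image_antimono) simp
    with image_Suc[of k] show ?thesis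
      by (rule order_trans)
  qed
  then show "g ` eventual_image g A \<subseteq> eventual_image g A"
    unfolding eventual_image_def by blast
next
  show "eventual_image g A \<subseteq> g ` eventual_image g A"
  proof
    fix w assume w: "w \<in> eventual_image g A"
    define Q where "Q k = (g ^^ k) ` A \<inter> {u \<in> A. g u = w}" for k
    have "closed {u \<in> A. g u = w}"
      using cont compact_imp_closed[OF compact] by (rule continuous_closed_preimage_constant)
    then have compact_Q: "compact (Q k)" for k
      unfolding Q_def by (rule compact_Int_closed[OF compact_funpow_image])
    have nonempty_Q: "Q k \<noteq> {}" for k
    proof -
      have "w \<in> (g ^^ Suc k) ` A"
        using w unfolding eventual_image_def by blast
      then obtain x where x: "x \<in> A" "w = g ((g ^^ k) x)"
        by auto
      have "(g ^^ k) x \<in> A"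
        using funpow_image_subset[OF maps, of k] x(1) by blast
      with x have "(g ^^ k) x \<in> Q k"
        unfolding Q_def by blast
      then show ?thesis by blast
    qed
    have "Q n \<subseteq> Q m" if "m \<le> n" for m n
      using funpow_image_antimono[OF that] unfolding Q_def by blast
    with compact_Q nonempty_Q have "(\<Inter>k. Q k) \<noteq> {}"
      by (rule compact_decreasing_nest_nonempty)
    then obtain u where u: "\<And>k. u \<in> Q k"
      by blast
    then have "u \<in> eventual_image g A" and "g u = w"
      unfolding eventual_image_def Q_def by blast+
    then show "w \<in> g ` eventual_image g A"
      by blast
  qed
qed

end

lemma gcd_dvd_div_prime_if_not_prime_power_dvd:
  fixes e n p :: nat
  assumes p: "prime p" and "p ^ a dvd n" and not_dvd: "\<not> p ^ a dvd e"
  shows "gcd e n dvd n div p"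
proof -
  obtain h where n: "n = gcd e n * h"
    by (rule dvdE[OF gcd_dvd2])
  show ?thesis
  proof (cases "p dvd h")
    case True
    then obtain h' where "h = p * h'"
      by (rule dvdE)
    with n p have "n div p = gcd e n * h'"
      by (metis div_mult_self1_is_m mult.left_commute prime_gt_0_nat)
    then show ?thesis
      by simp
  next
    case False
    with p have "coprime (p ^ a) h"
      by (simp add: prime_imp_coprime)
    moreover have "p ^ a dvd gcd e n * h"
      using \<open>p ^ a dvd n\<close> n by simp
    ultimately have "p ^ a dvd gcd e n"
      by (simp add: coprime_dvd_mult_left_iff)
    then have "p ^ a dvd e"
      using gcd_dvd1 dvd_trans by blast
    with not_dvd show ?thesis ..
  qed
qed

lemma periodic_pred_at_gcd_multiples:
  fixes e n d :: nat
  assumes "Q 0" and step: "\<And>j. Q j \<Longrightarrow> Q (j + e)" and periodic: "\<And>j. Q (j + n) = Q j"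
    and "e \<noteq> 0" and "gcd e n dvd d"
  shows "Q d"
proof -
  have multiple: "Q (t * e)" for t
  proof (induction t)
    case (Suc t)
    then show ?case
      using step[of "t * e"] by (simp add: add.commute)
  qed (simp add: \<open>Q 0\<close>)
  have shift: "Q (k * n + j) = Q j" for k j
  proof (induction k)
    case (Suc k)
    have "Suc k * n + j = (k * n + j) + n"
      by simp
    then show ?case
      by (simp only: periodic Suc.IH)
  qed simp
  obtain x y where bezout: "e * x = n * y + gcd e n"
    using bezout_nat[OF \<open>e \<noteq> 0\<close>] by blast
  obtain c where c: "d = gcd e n * c"
    using \<open>gcd e n dvd d\<close> by (rule dvdE)
  have "(x * c) * e = (e * x) * c"
    by (simp only: ac_simps)
  also have "\<dots> = (y * c) * n + d"
    unfolding bezout c by (simp add: algebra_simps)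
  finally have "Q ((y * c) * n + d)"
    using multiple[of "x * c"] by simp
  then show ?thesis
    by (simp only: shift)
qed

lemma funpow_image_periodic:
  assumes "(f ^^ n) ` C = C"
  shows "(f ^^ (k * n + j)) ` C = (f ^^ j) ` C"
proof (induction k)
  case (Suc k)
  have "Suc k * n + j = (k * n + j) + n"
    by simp
  then have "(f ^^ (Suc k * n + j)) ` C = (f ^^ (k * n + j)) ` (f ^^ n) ` C"
    by (simp only: funpow_add image_comp)
  then show ?case
    using Suc assms by simp
qed simp

lemma funpow_image_mod:
  assumes "(f ^^ n) ` C = C"
  shows "(f ^^ j) ` C = (f ^^ (j mod n)) ` C"
  using funpow_image_periodic[OF assms, of "j div n" "j mod n"] by simp

lemma funpow_image_eq_if_subset_dvd:
  assumes "(f ^^ n) ` C = C" and "0 < n" and "d dvd n" and sub: "C \<subseteq> (f ^^ d) ` C"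
  shows "(f ^^ d) ` C = C"
proof -
  have step: "(f ^^ (i * d)) ` C \<subseteq> (f ^^ (Suc i * d)) ` C" for i
  proof -
    have "Suc i * d = i * d + d"
      by simp
    then have "(f ^^ (Suc i * d)) ` C = (f ^^ (i * d)) ` (f ^^ d) ` C"
      by (simp only: funpow_add image_comp)
    then show ?thesis
      using image_mono[OF sub] by simp
  qed
  have chain: "(f ^^ d) ` C \<subseteq> (f ^^ (Suc i * d)) ` C" for i
  proof (induction i)
    case (Suc i)
    with step[of "Suc i"] show ?case
      by (rule order_trans[rotated])
  qed simp
  obtain m where "n = d * m"
    using \<open>d dvd n\<close> by (rule dvdE)
  moreover from this \<open>0 < n\<close> obtain k where "m = Suc k"
    by (cases m) auto
  ultimately have "n = Suc k * d"
    by simp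
  then show ?thesis
    using chain[of k] sub assms(1) by blast
qed

text \<open>
  The type of z is the set of members of \<F> containing z. Since g maps each member into
  itself, a g-preimage has a smaller type; so preimages of a point of minimal type outside
  B stay outside B and keep its type.
\<close>
lemma exists_type_preserving_preimages:
  fixes g :: "'a \<Rightarrow> 'a" and \<F> :: "'a set set"
  assumes "finite \<F>" and invariant: "\<And>S. S \<in> \<F> \<Longrightarrow> g ` S \<subseteq> S" and "C \<subseteq> g ` C"
    and "B \<in> \<F>" and "x \<in> C - B"
  obtains y where "y \<in> C - B"
    and "\<And>k. \<exists>z\<in>C. (g ^^ k) z = y \<and> (\<forall>S\<in>\<F>. z \<in> S \<longleftrightarrow> y \<in> S)"
proof -
  define type where "type z = {S \<in> \<F>. z \<in> S}" for z
  obtain y where y: "y \<in> C - B"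
    and minimal: "\<And>z. z \<in> C - B \<Longrightarrow> card (type y) \<le> card (type z)"
    using ex_has_least_nat[of "\<lambda>z. z \<in> C - B" x "\<lambda>z. card (type z)"] \<open>x \<in> C - B\<close> by blast
  have "finite (type y)"
    using \<open>finite \<F>\<close> by (simp add: type_def)
  have preimage: "\<exists>z\<in>C. (g ^^ k) z = y \<and> type z = type y" for k
  proof (induction k)
    case 0
    show ?case
      using y by force
  next
    case (Suc k)
    then obtain z where z: "z \<in> C" "(g ^^ k) z = y" "type z = type y"
      by blast
    obtain w where w: "w \<in> C" "g w = z"
      using z(1) \<open>C \<subseteq> g ` C\<close> by blast
    have sub: "type w \<subseteq> type y"
      using invariant w(2) z(3) unfolding type_def by blast
    then have "w \<notin> B"
      using y \<open>B \<in> \<F>\<close> unfolding type_def by blast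
    then have "card (type y) \<le> card (type w)"
      using minimal w(1) by blast
    with \<open>finite (type y)\<close> sub have "type w = type y"
      by (intro card_seteq)
    moreover have "(g ^^ Suc k) w = y"
      using w z by (simp del: funpow.simps add: funpow_Suc_right)
    ultimately show ?case
      using w(1) by blast
  qed
  show ?thesis
  proof (rule that[OF y])
    fix k
    obtain z where "z \<in> C" "(g ^^ k) z = y" "type z = type y"
      using preimage by blast
    then show "\<exists>z\<in>C. (g ^^ k) z = y \<and> (\<forall>S\<in>\<F>. z \<in> S \<longleftrightarrow> y \<in> S)"
      unfolding type_def by blast
  qed
qed

lemma exists_invariant_subset_of_type:
  fixes g :: "'a::t2_space \<Rightarrow> 'a"
  assumes "compact C" and "continuous_on C g" and "g ` C = C"
    and "finite \<F>" and \<F>: "\<And>S. S \<in> \<F> \<Longrightarrow> closed S \<and> g ` S \<subseteq> S"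
    and "B \<in> \<F>" and "x \<in> C - B"
  obtains y P where "y \<in> C - B" "compact P" "P \<subseteq> C" "g ` P = P" "y \<in> P"
    and "\<And>z S. z \<in> P \<Longrightarrow> S \<in> \<F> \<Longrightarrow> y \<in> S \<Longrightarrow> z \<in> S"
proof -
  have invariant: "g ` S \<subseteq> S" if "S \<in> \<F>" for S
    using \<F>[OF that] by blast
  have cover: "C \<subseteq> g ` C"
    using \<open>g ` C = C\<close> by simp
  obtain y where y: "y \<in> C - B"
    and preimages: "\<And>k. \<exists>z\<in>C. (g ^^ k) z = y \<and> (\<forall>S\<in>\<F>. z \<in> S \<longleftrightarrow> y \<in> S)"
    using exists_type_preserving_preimages[OF \<open>finite \<F>\<close> invariant cover \<open>B \<in> \<F>\<close> \<open>x \<in> C - B\<close>]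
    by blast
  define A where "A = C \<inter> \<Inter>{S \<in> \<F>. y \<in> S}"
  have "closed (\<Inter>{S \<in> \<F>. y \<in> S})"
    using \<F> by (intro closed_Inter) blast
  with \<open>compact C\<close> have "compact A"
    unfolding A_def by (rule compact_Int_closed)
  moreover have "continuous_on A g"
    using \<open>continuous_on C g\<close> by (rule continuous_on_subset) (simp add: A_def)
  moreover have "g ` A \<subseteq> A"
  proof -
    have "g ` A \<subseteq> g ` C"
      by (rule image_mono) (simp add: A_def)
    then have "g ` A \<subseteq> C"
      using \<open>g ` C = C\<close> by simp
    moreover have "g ` A \<subseteq> S" if "S \<in> \<F>" "y \<in> S" for S
    proof -
      have "g ` A \<subseteq> g ` S"
        by (rule image_mono) (use that in \<open>auto simp: A_def\<close>)
      with \<F>[OF that(1)] show ?thesis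
        by blast
    qed
    ultimately show ?thesis
      unfolding A_def by (intro Int_greatest Inter_greatest) auto
  qed
  ultimately have P: "compact (eventual_image g A)" "g ` eventual_image g A = eventual_image g A"
    by (simp_all add: compact_eventual_image image_eventual_image)
  have "y \<in> (g ^^ k) ` A" for k
  proof -
    obtain z where z: "z \<in> C" "(g ^^ k) z = y" "\<forall>S\<in>\<F>. z \<in> S \<longleftrightarrow> y \<in> S"
      using preimages by blast
    then have "z \<in> A"
      unfolding A_def by blast
    with z(2) show ?thesis
      by blast
  qed
  then have "y \<in> eventual_image g A"
    unfolding eventual_image_def by blast
  moreover have "eventual_image g A \<subseteq> A"
    by (rule eventual_image_subset)
  ultimately show ?thesis
    by (intro that[OF y P(1) _ P(2)]) (auto simp: A_def)
qed

lemma prime_power_dvd_return_time: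
  fixes f :: "'a \<Rightarrow> 'a" and p :: nat
  assumes periodic: "(f ^^ n) ` C = C" and "prime p" and "p ^ a dvd n"
    and "y \<in> C" and "y \<notin> (f ^^ (n div p)) ` C"
    and type: "\<And>j. y \<in> (f ^^ j) ` C \<Longrightarrow> z \<in> (f ^^ j) ` C" and "(f ^^ e) z = y"
  shows "p ^ a dvd e"
proof (rule ccontr)
  assume not_dvd: "\<not> p ^ a dvd e"
  have "y \<in> (f ^^ (n div p)) ` C"
  proof (rule periodic_pred_at_gcd_multiples[where Q = "\<lambda>j. y \<in> (f ^^ j) ` C"])
    show "y \<in> (f ^^ 0) ` C"
      using \<open>y \<in> C\<close> by simp
    show "y \<in> (f ^^ (j + e)) ` C" if "y \<in> (f ^^ j) ` C" for j
    proof -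
      have "y \<in> (f ^^ e) ` (f ^^ j) ` C"
        using type[OF that] \<open>(f ^^ e) z = y\<close> by blast
      then show ?thesis
        by (simp add: funpow_add image_comp add.commute)
    qed
    show "(y \<in> (f ^^ (j + n)) ` C) = (y \<in> (f ^^ j) ` C)" for j
      using funpow_image_periodic[OF periodic, of 1 j] by (simp add: add.commute)
    show "e \<noteq> 0"
      using not_dvd by (metis dvd_0_right)
    show "gcd e n dvd n div p"
      using gcd_dvd_div_prime_if_not_prime_power_dvd assms(2,3) not_dvd by blast
  qed
  with \<open>y \<notin> (f ^^ (n div p)) ` C\<close> show False ..
qed

lemma funpow_image_orbit_union:
  assumes "(f ^^ n) ` P = P"
  shows "(f ^^ q) ` (\<Union>i<n. (f ^^ (i * q)) ` P) = (\<Union>i<n. (f ^^ (i * q)) ` P)"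
proof -
  define G where "G i = (f ^^ (i * q)) ` P" for i
  have "(f ^^ q) ` G i = G (Suc i)" for i
    by (simp add: G_def image_comp funpow_add[symmetric] add.commute)
  moreover have "G n = G 0"
    using funpow_image_periodic[OF assms, of q 0] by (simp add: G_def mult.commute)
  then have "(\<Union>i<n. G (Suc i)) = (\<Union>i<n. G i)"
  proof (cases n)
    case (Suc m)
    then have "(\<Union>i<n. G (Suc i)) = (\<Union>i<m. G (Suc i)) \<union> G n"
      by (simp add: lessThan_Suc Un_commute)
    also have "\<dots> = (\<Union>i<n. G i)"
      using \<open>G n = G 0\<close> Suc by (simp add: lessThan_Suc_eq_insert_0 Un_commute)
    finally show ?thesis .
  qed simp
  ultimately show ?thesis
    by (simp add: image_UN G_def)
qed

lemma in_Per_hyperspace_if_return_times_dvd: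
  fixes f :: "'a::t2_space \<Rightarrow> 'a"
  assumes "continuous_on X f" and "f ` X \<subseteq> X"
    and "compact P" and "P \<subseteq> X" and "(f ^^ n) ` P = P" and "0 < n"
    and "y \<in> P" and "0 < q" and return: "\<And>z e. z \<in> P \<Longrightarrow> (f ^^ e) z = y \<Longrightarrow> q dvd e"
  shows "q \<in> Per (hyperspace X) (induced_map f)"
proof -
  define E where "E = (\<Union>i<n. (f ^^ (i * q)) ` P)"
  have "compact ((f ^^ k) ` P)" for k
    using continuous_on_subset[OF continuous_on_funpow[OF assms(1,2)] \<open>P \<subseteq> X\<close>] \<open>compact P\<close>
    by (rule compact_continuous_image)
  then have "closed E"
    unfolding E_def by (simp add: compact_imp_closed closed_UN)
  moreover have "E \<subseteq> X"
    unfolding E_def using funpow_image_subset[OF \<open>f ` X \<subseteq> X\<close>] \<open>P \<subseteq> X\<close> by blast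
  moreover have "y \<in> E"
    unfolding E_def using \<open>y \<in> P\<close> \<open>0 < n\<close> by force
  ultimately have "E \<in> hyperspace X"
    by (auto simp: hyperspace_def)
  have "(f ^^ q) ` E = E"
    unfolding E_def using \<open>(f ^^ n) ` P = P\<close> by (rule funpow_image_orbit_union)
  moreover have "(f ^^ m) ` E \<noteq> E" if "0 < m" "m < q" for m
  proof
    assume "(f ^^ m) ` E = E"
    with \<open>y \<in> E\<close> have "y \<in> (f ^^ m) ` E"
      by simp
    then obtain i z where "z \<in> P" "(f ^^ m) ((f ^^ (i * q)) z) = y"
      unfolding E_def by blast
    then have "(f ^^ (m + i * q)) z = y"
      by (simp add: funpow_add)
    with \<open>z \<in> P\<close> have "q dvd m + i * q"
      by (rule return)
    then have "q dvd m"
      by simp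
    with that show False
      using dvd_imp_le by fastforce
  qed
  ultimately have "least_period (induced_map f) E q"
    unfolding least_period_induced_map_iff using \<open>0 < q\<close> by simp
  with \<open>E \<in> hyperspace X\<close> show ?thesis
    unfolding Per_def by blast
qed

lemma not_subset_funpow_image_if_least_period:
  assumes "least_period (induced_map f) C n" and "d dvd n" and "0 < d" and "d < n"
  shows "\<not> C \<subseteq> (f ^^ d) ` C"
proof
  assume sub: "C \<subseteq> (f ^^ d) ` C"
  have periodic: "(f ^^ n) ` C = C" and "0 < n"
    and minimal: "\<And>m. 0 < m \<Longrightarrow> m < n \<Longrightarrow> (f ^^ m) ` C \<noteq> C"
    using assms(1) unfolding least_period_induced_map_iff by auto
  have "(f ^^ d) ` C = C"
    using periodic \<open>0 < n\<close> \<open>d dvd n\<close> sub by (rule funpow_image_eq_if_subset_dvd)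
  with minimal[OF \<open>0 < d\<close> \<open>d < n\<close>] show False ..
qed

lemma compact_if_in_hyperspace: "compact X \<Longrightarrow> C \<in> hyperspace X \<Longrightarrow> compact C"
  unfolding hyperspace_def by (metis (mono_tags) Int_absorb1 compact_Int_closed mem_Collect_eq)

lemma prime_power_in_Per_hyperspace_if_outside_divisor_image:
  fixes f :: "'a::t2_space \<Rightarrow> 'a" and p :: nat
  assumes "compact X" and "continuous_on X f" and "f ` X \<subseteq> X"
    and "C \<in> hyperspace X" and periodic: "(f ^^ n) ` C = C" and "0 < n"
    and "prime p" and "p ^ a dvd n" and x: "x \<in> C - (f ^^ (n div p)) ` C"
  shows "p ^ a \<in> Per (hyperspace X) (induced_map f)"
proof -
  have "C \<subseteq> X" and "compact C"
    using assms(1,4) compact_if_in_hyperspace by (auto simp: hyperspace_def)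
  have cont: "continuous_on C (f ^^ k)" for k
    using continuous_on_subset[OF continuous_on_funpow[OF assms(2,3)] \<open>C \<subseteq> X\<close>] .
  define \<F> where "\<F> = (\<lambda>j. (f ^^ j) ` C) ` {..<n}"
  have "finite \<F>"
    unfolding \<F>_def by simp
  have \<F>: "closed S \<and> (f ^^ n) ` S \<subseteq> S" if "S \<in> \<F>" for S
  proof -
    obtain j where S: "S = (f ^^ j) ` C"
      using \<open>S \<in> \<F>\<close> unfolding \<F>_def by blast
    have "compact S"
      unfolding S using cont \<open>compact C\<close> by (rule compact_continuous_image)
    moreover have "(f ^^ n) ` S = S"
      using funpow_image_periodic[OF periodic, of 1 j]
      by (simp add: S image_comp funpow_add[symmetric] add.commute)
    ultimately show ?thesis
      by (simp add: compact_imp_closed)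
  qed
  have "(f ^^ (n div p)) ` C \<in> \<F>"
    unfolding \<F>_def using \<open>0 < n\<close> prime_gt_1_nat[OF \<open>prime p\<close>] by simp
  from exists_invariant_subset_of_type[OF \<open>compact C\<close> cont periodic \<open>finite \<F>\<close> \<F> this x]
  obtain y P where y: "y \<in> C - (f ^^ (n div p)) ` C"
    and P: "compact P" "P \<subseteq> C" "(f ^^ n) ` P = P" "y \<in> P"
    and type: "\<And>z S. z \<in> P \<Longrightarrow> S \<in> \<F> \<Longrightarrow> y \<in> S \<Longrightarrow> z \<in> S"
    by blast
  have "p ^ a dvd e" if "z \<in> P" "(f ^^ e) z = y" for z e
  proof (rule prime_power_dvd_return_time[OF periodic \<open>prime p\<close> \<open>p ^ a dvd n\<close>])
    show "z \<in> (f ^^ j) ` C" if "y \<in> (f ^^ j) ` C" for j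
      using type[OF \<open>z \<in> P\<close>, of "(f ^^ (j mod n)) ` C"] that \<open>0 < n\<close>
      unfolding \<F>_def funpow_image_mod[OF periodic, of j] by simp
  qed (use y that in auto)
  moreover have "P \<subseteq> X"
    using P(2) \<open>C \<subseteq> X\<close> by blast
  ultimately show ?thesis
    using in_Per_hyperspace_if_return_times_dvd[OF assms(2,3) P(1) _ P(3) \<open>0 < n\<close> P(4)]
      prime_gt_0_nat[OF \<open>prime p\<close>] by simp
qed

lemma prime_power_divisor_in_Per_hyperspace:
  fixes f :: "'a::t2_space \<Rightarrow> 'a" and p :: nat
  assumes "compact X" and "continuous_on X f" and "f ` X \<subseteq> X"
    and "n \<in> Per (hyperspace X) (induced_map f)" and "prime p" and "a \<ge> 1" and "p ^ a dvd n"
  shows "p ^ a \<in> Per (hyperspace X) (induced_map f)"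
proof -
  obtain C where "C \<in> hyperspace X" and period: "least_period (induced_map f) C n"
    using \<open>n \<in> Per (hyperspace X) (induced_map f)\<close> unfolding Per_def by blast
  then have "0 < n" and periodic: "(f ^^ n) ` C = C"
    by (auto simp: least_period_induced_map_iff)
  have "p dvd n"
    using dvd_trans[OF dvd_power[of a p] \<open>p ^ a dvd n\<close>] \<open>a \<ge> 1\<close> by simp
  then obtain d where n: "n = p * d"
    by (rule dvdE)
  with \<open>0 < n\<close> prime_gt_1_nat[OF \<open>prime p\<close>] have "0 < d" "d < n" "n div p = d"
    by auto
  with n have "\<not> C \<subseteq> (f ^^ (n div p)) ` C"
    using not_subset_funpow_image_if_least_period[OF period] by simp
  then obtain x where "x \<in> C - (f ^^ (n div p)) ` C"
    by blast
  then show ?thesis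
    by (rule prime_power_in_Per_hyperspace_if_outside_divisor_image
        [OF assms(1-3) \<open>C \<in> hyperspace X\<close> periodic \<open>0 < n\<close> assms(5,7)])
qed

lemma Per_subset_Per_hyperspace:
  fixes f :: "'a::t1_space \<Rightarrow> 'a"
  shows "Per X f \<subseteq> Per (hyperspace X) (induced_map f)"
proof
  fix n assume "n \<in> Per X f"
  then obtain x where "x \<in> X" and "least_period f x n"
    unfolding Per_def by blast
  then have "{x} \<in> hyperspace X" and "least_period (induced_map f) {x} n"
    by (simp_all add: hyperspace_def least_period_def funpow_induced_map)
  then show "n \<in> Per (hyperspace X) (induced_map f)"
    unfolding Per_def by blast
qed

lemma one_in_Per_hyperspace:
  fixes f :: "'a::t2_space \<Rightarrow> 'a"
  assumes "compact X" and "X \<noteq> {}" and "continuous_on X f" and "f ` X \<subseteq> X"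
  shows "1 \<in> Per (hyperspace X) (induced_map f)"
proof -
  have "compact (eventual_image f X)" and "f ` eventual_image f X = eventual_image f X"
    using assms(1,3,4) by (simp_all add: compact_eventual_image image_eventual_image)
  moreover have "eventual_image f X \<noteq> {}"
    using assms by (simp add: eventual_image_nonempty)
  ultimately have "eventual_image f X \<in> hyperspace X"
    and "least_period (induced_map f) (eventual_image f X) 1"
    using eventual_image_subset[of f X]
    by (auto simp: hyperspace_def compact_imp_closed least_period_induced_map_iff)
  then show ?thesis
    unfolding Per_def by blast
qed

theorem theorem5p1:
  fixes X :: "'a::metric_space set" and f :: "'a \<Rightarrow> 'a"
  assumes "compact X" and "X \<noteq> {}"
    and "continuous_on X f" and "f ` X \<subseteq> X"
  shows "Per X f \<union> {1} \<subseteq> Per (hyperspace X) (induced_map f) \<and>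
         (\<forall>n p a. n \<in> Per (hyperspace X) (induced_map f) \<and> prime (p::nat) \<and> a \<ge> 1
           \<and> p ^ a dvd n \<longrightarrow> p ^ a \<in> Per (hyperspace X) (induced_map f))"
  using Per_subset_Per_hyperspace one_in_Per_hyperspace[OF assms]
    prime_power_divisor_in_Per_hyperspace[OF assms(1,3,4)]
  by blast

end
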